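(* Let $I$ be a finite group and $l$ a positive integer coprime to $|I|$. Let $G=\mathbb{Z}/l\mathbb{Z}\wr I=(\mathbb{Z}/l\mathbb{Z})^I\rtimes I$ and let $I_1\le G$ be a subgroup isomorphic to $I$. Then $\bigcap_{g\in G} gI_1g^{-1}=\{e\}$; that is, the largest subgroup of $I_1$ that is normal in $G$ is trivial.
   Context: In the wreath product, $(\mathbb{Z}/l\mathbb{Z})^I$ is the group of functions $I\to\mathbb{Z}/l\mathbb{Z}$, and $I$ acts on it by permuting coordinates via left translation; $q:G\to I$ denotes the canonical projection. *)

theory Defs
  imports "HOL-Algebra.Algebra"
begin

text \<open>I acts on (Z/lZ)^I by
  left translation: (a \<cdot> f)(x) = f(a\<inverse> x).\<close>

definition wreath_cyclic :: "('a, 'b) monoid_scheme \<Rightarrow> nat \<Rightarrow> (('a \<Rightarrow> nat) \<times> 'a) monoid" where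
  "wreath_cyclic I l =
    \<lparr> carrier = (carrier I \<rightarrow>\<^sub>E {..<l}) \<times> carrier I,
      monoid.mult = (\<lambda>(f, a) (g, b).
                ((\<lambda>x\<in>carrier I. (f x + g (inv\<^bsub>I\<^esub> a \<otimes>\<^bsub>I\<^esub> x)) mod l), a \<otimes>\<^bsub>I\<^esub> b)),
      monoid.one = ((\<lambda>x\<in>carrier I. 0), \<one>\<^bsub>I\<^esub>) \<rparr>"

end

theory Submission
  imports Defs
begin

text \<open>Let \<open>N\<close> be the core of \<open>H\<close>. Since \<open>|H| = |I|\<close> is coprime to \<open>l\<close>, no non-trivial element
  of \<open>H\<close> lies in the base group \<open>(\<int>/l\<int>)\<^sup>I\<close>, whose elements have order dividing \<open>l\<close>; so the
  projection \<open>q\<close> is injective on \<open>H\<close>. Let \<open>\<delta>\<close> be the base element supported at \<open>1\<close>. For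
  \<open>n \<in> N\<close>, normality of \<open>N\<close> puts the commutator \<open>[n, \<delta>]\<close> into \<open>H\<close>, and it lies in the base
  group, hence is trivial. But \<open>n = (f, a)\<close> commutes with \<open>\<delta>\<close> only if \<open>a\<close> fixes the support
  of \<open>\<delta>\<close>, i.e. \<open>a = 1\<close>. Then \<open>n\<close> lies in the base group, so \<open>n = 1\<close>.\<close>

lemma Suc_mod_neq_self:
  fixes k l :: nat
  assumes "k < l" and "2 \<le> l"
  shows "Suc k mod l \<noteq> k"
proof (cases "Suc k < l")
  case False
  with assms(1) have "Suc k = l" by simp
  with assms(2) show ?thesis by auto
qed simp

definition normal_core :: "('a, 'b) monoid_scheme \<Rightarrow> 'a set \<Rightarrow> 'a set" where
  "normal_core G H = (\<Inter>g\<in>carrier G. {g \<otimes>\<^bsub>G\<^esub> h \<otimes>\<^bsub>G\<^esub> inv\<^bsub>G\<^esub> g | h. h \<in> H})"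

lemma (in group) one_mem_normal_core: "subgroup H G \<Longrightarrow> \<one> \<in> normal_core G H"
  unfolding normal_core_def by (force dest: subgroup.one_closed)

lemma (in group) normal_core_subset: "H \<subseteq> carrier G \<Longrightarrow> normal_core G H \<subseteq> H"
  unfolding normal_core_def by force

lemma (in group) normal_core_conj_mem:
  assumes "H \<subseteq> carrier G" and "n \<in> normal_core G H" and "g \<in> carrier G"
  shows "inv g \<otimes> n \<otimes> g \<in> H"
proof -
  obtain h where "h \<in> H" and n: "n = g \<otimes> h \<otimes> inv g"
    using assms(2,3) unfolding normal_core_def by blast
  moreover have "inv g \<otimes> n \<otimes> g = h"
    using assms(1,3) \<open>h \<in> H\<close> by (auto simp: n m_assoc simp flip: m_assoc[of "inv g" g])
  ultimately show ?thesis by simp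
qed

lemma (in group) commute_if_commutator_eq_one:
  assumes x: "x \<in> carrier G" and y: "y \<in> carrier G" and "inv x \<otimes> (inv y \<otimes> x \<otimes> y) = \<one>"
  shows "x \<otimes> y = y \<otimes> x"
proof -
  have "inv y \<otimes> x \<otimes> y = x"
    using assms by (metis inv_closed m_closed inv_equality inv_inv)
  then have "y \<otimes> (inv y \<otimes> x \<otimes> y) = y \<otimes> x" by simp
  then show ?thesis using x y by (simp add: m_assoc flip: m_assoc[of y "inv y"])
qed

lemma (in group) eq_one_if_pow_coprime_subgroup_card:
  assumes "subgroup H G" and "coprime l (card H)" and "x \<in> H" and "x [^] l = \<one>"
  shows "x = \<one>"
proof -
  interpret K: group "G\<lparr>carrier := H\<rparr>"
    using assms(1) by (rule subgroup.subgroup_is_group) (rule is_group)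
  have x: "x \<in> carrier G" using assms(1,3) by (rule subgroup.mem_carrier)
  have "x [^] card H = \<one>"
    using K.pow_order_eq_1[of x] assms(3) by (simp add: order_def flip: nat_pow_consistent)
  then have "ord x dvd card H" and "ord x dvd l"
    using assms(4) pow_eq_id[OF x] by auto
  then have "ord x = 1" using assms(2) coprime_common_divisor by (metis nat_dvd_1_iff_1)
  then show ?thesis using ord_eq_1[OF x] by simp
qed

lemma wreath_cyclic_carrier:
  "carrier (wreath_cyclic I l) = (carrier I \<rightarrow>\<^sub>E {..<l}) \<times> carrier I"
  by (simp add: wreath_cyclic_def)

lemma wreath_cyclic_mult [simp]:
  "(f, a) \<otimes>\<^bsub>wreath_cyclic I l\<^esub> (g, b) =
   ((\<lambda>x\<in>carrier I. (f x + g (inv\<^bsub>I\<^esub> a \<otimes>\<^bsub>I\<^esub> x)) mod l), a \<otimes>\<^bsub>I\<^esub> b)"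
  by (simp add: wreath_cyclic_def)

lemma wreath_cyclic_one: "\<one>\<^bsub>wreath_cyclic I l\<^esub> = ((\<lambda>x\<in>carrier I. 0), \<one>\<^bsub>I\<^esub>)"
  by (simp add: wreath_cyclic_def)

lemma group_wreath_cyclic:
  assumes "group I" and "l > 0"
  shows "group (wreath_cyclic I l)"
proof (rule groupI)
  interpret I: group I by fact
  let ?G = "wreath_cyclic I l"
  show "x \<otimes>\<^bsub>?G\<^esub> y \<in> carrier ?G" if "x \<in> carrier ?G" "y \<in> carrier ?G" for x y
    using that assms(2) by (auto simp: wreath_cyclic_carrier)
  show "\<one>\<^bsub>?G\<^esub> \<in> carrier ?G"
    using assms(2) by (auto simp: wreath_cyclic_carrier wreath_cyclic_one)
  show "x \<otimes>\<^bsub>?G\<^esub> y \<otimes>\<^bsub>?G\<^esub> z = x \<otimes>\<^bsub>?G\<^esub> (y \<otimes>\<^bsub>?G\<^esub> z)"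
    if "x \<in> carrier ?G" "y \<in> carrier ?G" "z \<in> carrier ?G" for x y z
  proof -
    obtain f a g b h c where xyz: "x = (f, a)" "y = (g, b)" "z = (h, c)"
      by (metis prod.exhaust)
    with that have a: "a \<in> carrier I" and b: "b \<in> carrier I" and c: "c \<in> carrier I"
      by (auto simp: wreath_cyclic_carrier)
    have translate: "inv\<^bsub>I\<^esub> (a \<otimes>\<^bsub>I\<^esub> b) \<otimes>\<^bsub>I\<^esub> u = inv\<^bsub>I\<^esub> b \<otimes>\<^bsub>I\<^esub> (inv\<^bsub>I\<^esub> a \<otimes>\<^bsub>I\<^esub> u)"
      if "u \<in> carrier I" for u
      using a b that by (simp add: I.inv_mult_group I.m_assoc)
    show ?thesis
      using xyz a b c
      by (auto intro!: restrict_ext simp: translate I.m_assoc mod_add_left_eq mod_add_right_eq add.assoc)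
  qed
  show "\<one>\<^bsub>?G\<^esub> \<otimes>\<^bsub>?G\<^esub> x = x" if "x \<in> carrier ?G" for x
  proof -
    obtain f a where x: "x = (f, a)" by (cases x)
    with that have a: "a \<in> carrier I" and f: "f \<in> carrier I \<rightarrow>\<^sub>E {..<l}"
      by (auto simp: wreath_cyclic_carrier)
    have "(\<lambda>u\<in>carrier I. (0 + f (inv\<^bsub>I\<^esub> \<one>\<^bsub>I\<^esub> \<otimes>\<^bsub>I\<^esub> u)) mod l) = f"
      using f by (auto simp: fun_eq_iff PiE_def extensional_def Pi_def)
    then show ?thesis using x a by (simp add: wreath_cyclic_one cong: restrict_cong)
  qed
  show "\<exists>y\<in>carrier ?G. y \<otimes>\<^bsub>?G\<^esub> x = \<one>\<^bsub>?G\<^esub>" if "x \<in> carrier ?G" for x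
  proof -
    obtain f a where x: "x = (f, a)" by (cases x)
    with that have a: "a \<in> carrier I" and f: "f \<in> carrier I \<rightarrow>\<^sub>E {..<l}"
      by (auto simp: wreath_cyclic_carrier)
    let ?y = "((\<lambda>u\<in>carrier I. (l - f (a \<otimes>\<^bsub>I\<^esub> u)) mod l), inv\<^bsub>I\<^esub> a)"
    have "l - f (a \<otimes>\<^bsub>I\<^esub> u) + f (a \<otimes>\<^bsub>I\<^esub> u) = l" if "u \<in> carrier I" for u
      using f a that by (auto intro!: le_add_diff_inverse2 less_imp_le)
    then have "?y \<otimes>\<^bsub>?G\<^esub> x = \<one>\<^bsub>?G\<^esub>"
      using a x by (auto intro!: restrict_ext simp: wreath_cyclic_one mod_add_left_eq)
    moreover have "?y \<in> carrier ?G"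
      using a assms(2) by (auto simp: wreath_cyclic_carrier)
    ultimately show ?thesis by blast
  qed
qed

lemma snd_hom_wreath_cyclic: "group I \<Longrightarrow> snd \<in> hom (wreath_cyclic I l) I"
  by (rule homI) (auto simp: wreath_cyclic_carrier split: prod.splits)

lemma wreath_cyclic_base_pow:
  assumes "group I" and "f \<in> carrier I \<rightarrow>\<^sub>E {..<l}"
  shows "(f, \<one>\<^bsub>I\<^esub>) [^]\<^bsub>wreath_cyclic I l\<^esub> (n::nat) = ((\<lambda>x\<in>carrier I. (n * f x) mod l), \<one>\<^bsub>I\<^esub>)"
proof (induction n)
  case 0
  then show ?case by (simp add: wreath_cyclic_one restrict_def)
next
  case (Suc n)
  interpret I: group I by fact
  have "(\<lambda>x\<in>carrier I. ((\<lambda>x\<in>carrier I. (n * f x) mod l) x + f (inv\<^bsub>I\<^esub> \<one>\<^bsub>I\<^esub> \<otimes>\<^bsub>I\<^esub> x)) mod l)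
     = (\<lambda>x\<in>carrier I. (Suc n * f x) mod l)"
    by (auto intro!: restrict_ext simp: mod_add_left_eq mod_add_right_eq add.commute)
  then show ?case by (simp add: Suc restrict_def)
qed

lemma wreath_cyclic_snd_eq_one_imp_eq_one:
  assumes "group I" and "l > 0"
    and "subgroup H (wreath_cyclic I l)" and "coprime l (card H)"
    and "x \<in> H" and "snd x = \<one>\<^bsub>I\<^esub>"
  shows "x = \<one>\<^bsub>wreath_cyclic I l\<^esub>"
proof -
  interpret G: group "wreath_cyclic I l" using assms(1,2) by (rule group_wreath_cyclic)
  obtain f where x: "x = (f, \<one>\<^bsub>I\<^esub>)" using assms(6) by (metis prod.collapse)
  have "x \<in> carrier (wreath_cyclic I l)" using assms(3,5) by (rule subgroup.mem_carrier)
  then have "f \<in> carrier I \<rightarrow>\<^sub>E {..<l}" by (simp add: x wreath_cyclic_carrier)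
  then have "x [^]\<^bsub>wreath_cyclic I l\<^esub> l = \<one>\<^bsub>wreath_cyclic I l\<^esub>"
    by (simp add: x wreath_cyclic_base_pow[OF assms(1)] wreath_cyclic_one)
  then show ?thesis using G.eq_one_if_pow_coprime_subgroup_card assms(3,4,5) by blast
qed

definition wreath_delta :: "('a, 'b) monoid_scheme \<Rightarrow> 'a \<Rightarrow> nat" where
  "wreath_delta I = (\<lambda>x\<in>carrier I. if x = \<one>\<^bsub>I\<^esub> then 1 else 0)"

lemma wreath_delta_mem_carrier:
  "group I \<Longrightarrow> l \<ge> 2 \<Longrightarrow> (wreath_delta I, \<one>\<^bsub>I\<^esub>) \<in> carrier (wreath_cyclic I l)"
  by (auto simp: wreath_cyclic_carrier wreath_delta_def group.is_monoid)

text \<open>For \<open>n = (f, a)\<close>, at the point \<open>a\<close> the two products take the values \<open>f(a) + \<delta>(1)\<close> and \<open>f(a) + \<delta>(a)\<close>.\<close>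

lemma wreath_cyclic_commute_delta_imp_snd_eq_one:
  assumes "group I" and "l \<ge> 2" and n: "n \<in> carrier (wreath_cyclic I l)"
    and comm: "n \<otimes>\<^bsub>wreath_cyclic I l\<^esub> (wreath_delta I, \<one>\<^bsub>I\<^esub>)
             = (wreath_delta I, \<one>\<^bsub>I\<^esub>) \<otimes>\<^bsub>wreath_cyclic I l\<^esub> n"
  shows "snd n = \<one>\<^bsub>I\<^esub>"
proof (rule ccontr)
  interpret I: group I by fact
  obtain f a where fa: "n = (f, a)" by (cases n)
  assume "snd n \<noteq> \<one>\<^bsub>I\<^esub>"
  with n fa have a: "a \<in> carrier I" "a \<noteq> \<one>\<^bsub>I\<^esub>" and "f a < l"
    by (auto simp: wreath_cyclic_carrier)
  have "(f a + 1) mod l = f a"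
    using fun_cong[OF arg_cong[where f = fst, OF comm], of a] fa a \<open>f a < l\<close>
    by (simp add: wreath_delta_def)
  with \<open>f a < l\<close> assms(2) show False by (simp add: Suc_mod_neq_self)
qed

lemma wreath_cyclic_normal_core_snd_eq_one:
  assumes "group I" and "l \<ge> 2" and "subgroup H (wreath_cyclic I l)"
    and base_trivial: "\<And>x. x \<in> H \<Longrightarrow> snd x = \<one>\<^bsub>I\<^esub> \<Longrightarrow> x = \<one>\<^bsub>wreath_cyclic I l\<^esub>"
    and core: "n \<in> normal_core (wreath_cyclic I l) H"
  shows "snd n = \<one>\<^bsub>I\<^esub>"
proof -
  let ?G = "wreath_cyclic I l" and ?\<delta> = "(wreath_delta I, \<one>\<^bsub>I\<^esub>)"
  interpret G: group ?G using assms(1,2) by (intro group_wreath_cyclic) auto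
  interpret I: group I by fact
  interpret q: group_hom ?G I snd using snd_hom_wreath_cyclic[OF assms(1)] by unfold_locales
  have H: "H \<subseteq> carrier ?G" using assms(3) by (rule subgroup.subset)
  have nH: "n \<in> H" using core G.normal_core_subset[OF H] by blast
  have \<delta>: "?\<delta> \<in> carrier ?G" using assms(1,2) by (rule wreath_delta_mem_carrier)
  let ?c = "inv\<^bsub>?G\<^esub> n \<otimes>\<^bsub>?G\<^esub> (inv\<^bsub>?G\<^esub> ?\<delta> \<otimes>\<^bsub>?G\<^esub> n \<otimes>\<^bsub>?G\<^esub> ?\<delta>)"
  have "?c \<in> H"
    using G.normal_core_conj_mem[OF H core \<delta>] nH assms(3)
    by (simp add: subgroup.m_closed subgroup.m_inv_closed)
  moreover have "snd ?c = \<one>\<^bsub>I\<^esub>"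
    using \<delta> nH H by (auto simp: q.hom_mult q.hom_inv I.m_assoc)
  ultimately have "?c = \<one>\<^bsub>?G\<^esub>" by (rule base_trivial)
  then have "n \<otimes>\<^bsub>?G\<^esub> ?\<delta> = ?\<delta> \<otimes>\<^bsub>?G\<^esub> n"
    using \<delta> nH H by (intro G.commute_if_commutator_eq_one) auto
  then show ?thesis
    using assms(1,2) nH H by (intro wreath_cyclic_commute_delta_imp_snd_eq_one) auto
qed

theorem mainTheorem3:
  fixes I :: "('a, 'b) monoid_scheme" and l :: nat and H :: "(('a \<Rightarrow> nat) \<times> 'a) set"
  assumes "group I" and "finite (carrier I)"
    and "l \<ge> 2" and "coprime l (order I)"
    and "subgroup H (wreath_cyclic I l)"
    and "(wreath_cyclic I l)\<lparr>carrier := H\<rparr> \<cong> I"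
  shows "(\<Inter>g\<in>carrier (wreath_cyclic I l).
            {g \<otimes>\<^bsub>wreath_cyclic I l\<^esub> h \<otimes>\<^bsub>wreath_cyclic I l\<^esub> inv\<^bsub>wreath_cyclic I l\<^esub> g | h. h \<in> H})
         = {\<one>\<^bsub>wreath_cyclic I l\<^esub>}"
proof -
  let ?G = "wreath_cyclic I l"
  interpret G: group ?G using assms(1,3) by (intro group_wreath_cyclic) auto
  have "coprime l (card H)" using assms(4) iso_same_card[OF assms(6)] by (simp add: order_def)
  then have base_trivial: "x = \<one>\<^bsub>?G\<^esub>" if "x \<in> H" "snd x = \<one>\<^bsub>I\<^esub>" for x
    using assms(1,3,5) that by (intro wreath_cyclic_snd_eq_one_imp_eq_one) auto
  have "normal_core ?G H \<subseteq> {\<one>\<^bsub>?G\<^esub>}"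
  proof
    fix n assume core: "n \<in> normal_core ?G H"
    then have "n \<in> H" using G.normal_core_subset assms(5) subgroup.subset by blast
    moreover have "snd n = \<one>\<^bsub>I\<^esub>"
      using wreath_cyclic_normal_core_snd_eq_one[OF assms(1,3,5) base_trivial core] .
    ultimately show "n \<in> {\<one>\<^bsub>?G\<^esub>}" by (simp add: base_trivial)
  qed
  then show ?thesis
    using G.one_mem_normal_core[OF assms(5)] unfolding normal_core_def by blast
qed

end
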